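(* Let $Z_\bullet$ be a semi-simplicial space and $Y_\bullet$ a semi-simplicial subspace which is full relative to $Z_\bullet$. If each inclusion $Y_n\hookrightarrow Z_n$ is a closed inclusion, then the induced map of geometric realisations $\|Y_\bullet\|\to\|Z_\bullet\|$ is a closed inclusion. The same holds with "closed inclusion" replaced by "open inclusion".
   Context: The geometric realisation $\|Z_\bullet\|$ is $\bigsqcup_{n\geq0}\Delta^n\times Z_n$ modulo the face relations, and $\|Z_\bullet\|^{(n)}$ denotes its $n$-skeleton (image of simplices of dimension $\leq n$). A semi-simplicial subspace $Y_\bullet\subseteq Z_\bullet$ (subspaces $Y_n\subseteq Z_n$ closed under the face maps) is full relative to $Z_\bullet$ if for each $n$ the square with maps $\Delta^n\times Y_n\to\Delta^n\times Z_n$, $\Delta^n\times Y_n\to\|Y_\bullet\|^{(n)}$, $\Delta^n\times Z_n\to\|Z_\bullet\|^{(n)}$, $\|Y_\bullet\|^{(n)}\to\|Z_\bullet\|^{(n)}$ is Cartesian in the category of sets; equivalently, a simplex $\sigma\in Z_n$ lies in $Y_n$ whenever at least one of its vertices lies in $Y_0$. *)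

theory Defs
  imports "HOL-Analysis.Analysis"
begin

definition quot_topology :: "'a topology \<Rightarrow> ('a \<Rightarrow> 'b) \<Rightarrow> 'b topology" where
  "quot_topology X q =
     topology (\<lambda>U. U \<subseteq> q ` topspace X \<and> openin X {x \<in> topspace X. q x \<in> U})"

lemma istopology_quot_topology:
  "istopology (\<lambda>U. U \<subseteq> q ` topspace X \<and> openin X {x \<in> topspace X. q x \<in> U})"
proof -
  have 1: "{x \<in> topspace X. q x \<in> S \<inter> T} =
      {x \<in> topspace X. q x \<in> S} \<inter> {x \<in> topspace X. q x \<in> T}" for S T by auto
  have 2: "{x \<in> topspace X. q x \<in> \<Union>K} = (\<Union>S\<in>K. {x \<in> topspace X. q x \<in> S})" for K
    by auto
  show ?thesis unfolding istopology_def 1 2 by auto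
qed

lemma openin_quot_topology:
  "openin (quot_topology X q) U \<longleftrightarrow>
     U \<subseteq> q ` topspace X \<and> openin X {x \<in> topspace X. q x \<in> U}"
  by (simp add: quot_topology_def istopology_quot_topology)

text \<open>The standard n-simplex, as points t of nat \<Rightarrow> real (product topology) with
  t i \<ge> 0, t i = 0 for i > n and t 0 + ... + t n = 1.\<close>

definition std_simplex :: "nat \<Rightarrow> (nat \<Rightarrow> real) set" where
  "std_simplex n = {t. (\<forall>i. 0 \<le> t i) \<and> (\<forall>i>n. t i = 0) \<and> (\<Sum>i\<le>n. t i) = 1}"

definition coface :: "nat \<Rightarrow> (nat \<Rightarrow> real) \<Rightarrow> (nat \<Rightarrow> real)" where
  "coface i t = (\<lambda>j. if j < i then t j else if j = i then 0 else t (j - 1))"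

definition semi_simplicial_space ::
  "(nat \<Rightarrow> 'a topology) \<Rightarrow> (nat \<Rightarrow> nat \<Rightarrow> 'a \<Rightarrow> 'a) \<Rightarrow> bool" where
  "semi_simplicial_space Z d \<longleftrightarrow>
     (\<forall>n i. i \<le> Suc n \<longrightarrow> continuous_map (Z (Suc n)) (Z n) (d n i)) \<and>
     (\<forall>n i j z. i < j \<and> j \<le> Suc (Suc n) \<and> z \<in> topspace (Z (Suc (Suc n))) \<longrightarrow>
        d n i (d (Suc n) j z) = d n (j - 1) (d (Suc n) i z))"

definition total_space ::
  "(nat \<Rightarrow> 'a topology) \<Rightarrow> (nat \<times> (nat \<Rightarrow> real) \<times> 'a) topology" where
  "total_space Z = sum_topology (\<lambda>n. prod_topology (top_of_set (std_simplex n)) (Z n)) UNIV"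

definition face_rel ::
  "(nat \<Rightarrow> 'a topology) \<Rightarrow> (nat \<Rightarrow> nat \<Rightarrow> 'a \<Rightarrow> 'a) \<Rightarrow>
   ((nat \<times> (nat \<Rightarrow> real) \<times> 'a) \<times> (nat \<times> (nat \<Rightarrow> real) \<times> 'a)) set" where
  "face_rel Z d = {((Suc n, (coface i t, z)), (n, (t, d n i z))) | n i t z.
       i \<le> Suc n \<and> t \<in> std_simplex n \<and> z \<in> topspace (Z (Suc n))}"

definition real_rel ::
  "(nat \<Rightarrow> 'a topology) \<Rightarrow> (nat \<Rightarrow> nat \<Rightarrow> 'a \<Rightarrow> 'a) \<Rightarrow>
   ((nat \<times> (nat \<Rightarrow> real) \<times> 'a) \<times> (nat \<times> (nat \<Rightarrow> real) \<times> 'a)) set" where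
  "real_rel Z d = {(p, q). p \<in> topspace (total_space Z) \<and>
                          (p, q) \<in> (face_rel Z d \<union> (face_rel Z d)\<inverse>)\<^sup>*}"

definition real_class ::
  "(nat \<Rightarrow> 'a topology) \<Rightarrow> (nat \<Rightarrow> nat \<Rightarrow> 'a \<Rightarrow> 'a) \<Rightarrow>
   nat \<times> (nat \<Rightarrow> real) \<times> 'a \<Rightarrow> (nat \<times> (nat \<Rightarrow> real) \<times> 'a) set" where
  "real_class Z d p = real_rel Z d `` {p}"

definition geom_real ::
  "(nat \<Rightarrow> 'a topology) \<Rightarrow> (nat \<Rightarrow> nat \<Rightarrow> 'a \<Rightarrow> 'a) \<Rightarrow>
   (nat \<times> (nat \<Rightarrow> real) \<times> 'a) set topology" where
  "geom_real Z d = quot_topology (total_space Z) (real_class Z d)"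

definition skeleton ::
  "(nat \<Rightarrow> 'a topology) \<Rightarrow> (nat \<Rightarrow> nat \<Rightarrow> 'a \<Rightarrow> 'a) \<Rightarrow> nat \<Rightarrow>
   (nat \<times> (nat \<Rightarrow> real) \<times> 'a) set set" where
  "skeleton Z d n = real_class Z d ` {p \<in> topspace (total_space Z). fst p \<le> n}"

definition sub_ss :: "(nat \<Rightarrow> 'a topology) \<Rightarrow> (nat \<Rightarrow> 'a set) \<Rightarrow> nat \<Rightarrow> 'a topology" where
  "sub_ss Z S n = subtopology (Z n) (S n)"

definition semi_simplicial_subspace ::
  "(nat \<Rightarrow> 'a topology) \<Rightarrow> (nat \<Rightarrow> nat \<Rightarrow> 'a \<Rightarrow> 'a) \<Rightarrow> (nat \<Rightarrow> 'a set) \<Rightarrow> bool" where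
  "semi_simplicial_subspace Z d S \<longleftrightarrow>
     (\<forall>n. S n \<subseteq> topspace (Z n)) \<and>
     (\<forall>n i y. i \<le> Suc n \<and> y \<in> S (Suc n) \<longrightarrow> d n i y \<in> S n)"

text \<open>The induced map \<parallel>Y\<parallel> \<rightarrow> \<parallel>Z\<parallel>: a Y-class is sent to the Z-class containing it.\<close>

definition induced_real_map ::
  "(nat \<Rightarrow> 'a topology) \<Rightarrow> (nat \<Rightarrow> nat \<Rightarrow> 'a \<Rightarrow> 'a) \<Rightarrow>
   (nat \<times> (nat \<Rightarrow> real) \<times> 'a) set \<Rightarrow> (nat \<times> (nat \<Rightarrow> real) \<times> 'a) set" where
  "induced_real_map Z d c = real_rel Z d `` c"

text \<open>Fullness: for each n the square
  \<Delta>^n \<times> Y_n \<rightarrow> \<Delta>^n \<times> Z_n,  \<Delta>^n \<times> Y_n \<rightarrow> \<parallel>Y\<parallel>^(n),  \<Delta>^n \<times> Z_n \<rightarrow> \<parallel>Z\<parallel>^(n),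
  \<parallel>Y\<parallel>^(n) \<rightarrow> \<parallel>Z\<parallel>^(n)
  is Cartesian in sets, i.e. the canonical map from \<Delta>^n \<times> Y_n to the pullback
  is a bijection.\<close>

definition full_rel ::
  "(nat \<Rightarrow> 'a topology) \<Rightarrow> (nat \<Rightarrow> nat \<Rightarrow> 'a \<Rightarrow> 'a) \<Rightarrow> (nat \<Rightarrow> 'a set) \<Rightarrow> bool" where
  "full_rel Z d S \<longleftrightarrow>
     (\<forall>n. bij_betw
        (\<lambda>(t, y). ((t, y), real_class (sub_ss Z S) d (n, (t, y))))
        (std_simplex n \<times> topspace (sub_ss Z S n))
        {((t, z), c). (t, z) \<in> std_simplex n \<times> topspace (Z n) \<and>
                      c \<in> skeleton (sub_ss Z S) d n \<and>
                      real_class Z d (n, (t, z)) = induced_real_map Z d c})"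

definition closed_inclusion :: "'a topology \<Rightarrow> 'b topology \<Rightarrow> ('a \<Rightarrow> 'b) \<Rightarrow> bool" where
  "closed_inclusion X Y f \<longleftrightarrow> embedding_map X Y f \<and> closedin Y (f ` topspace X)"

definition open_inclusion :: "'a topology \<Rightarrow> 'b topology \<Rightarrow> ('a \<Rightarrow> 'b) \<Rightarrow> bool" where
  "open_inclusion X Y f \<longleftrightarrow> embedding_map X Y f \<and> openin Y (f ` topspace X)"

end

theory Submission
  imports Defs
begin

text \<open>Let A be the union of the \<Delta>^n \<times> S_n inside the disjoint union of the \<Delta>^n \<times> Z_n.
  A face step could only leave A by going up from (n, t, d_i z) with d_i z \<in> S_n to
  (n+1, \<delta>_i t, z); but then ((\<delta>_i t, z), [n, t, d_i z]_Y) lies in the pullback of the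
  fullness square, and surjectivity onto the pullback gives z \<in> S_(n+1). Hence A is saturated
  for the realisation relation of Z, and on A the classes for Y and for Z coincide. If every S_n
  is closed (open), so is A, hence so is its image in \<parallel>Z\<parallel>, and the quotient map restricts to
  a quotient map from A onto that image. Since A carries the topology of the disjoint union of
  the \<Delta>^n \<times> Y_n, this identifies \<parallel>Y\<parallel> with a subspace of \<parallel>Z\<parallel>.\<close>

lemma coface_in_std_simplex:
  assumes t: "t \<in> std_simplex n" and i: "i \<le> Suc n"
  shows "coface i t \<in> std_simplex (Suc n)"
proof -
  have skip_i: "bij_betw (\<lambda>j. if j < i then j else Suc j) {..n} ({..Suc n} - {i})"
    by (rule bij_betw_byWitness[where f' = "\<lambda>j. if j < i then j else j - 1"]) (use i in auto)
  have "(\<Sum>j\<le>Suc n. coface i t j) = coface i t i + (\<Sum>j\<in>{..Suc n} - {i}. coface i t j)"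
    using sum.remove[of "{..Suc n}" i "coface i t"] i by simp
  also have "(\<Sum>j\<in>{..Suc n} - {i}. coface i t j) =
             (\<Sum>j\<le>n. coface i t (if j < i then j else Suc j))"
    using sum.reindex_bij_betw[OF skip_i, of "coface i t"] by simp
  also have "\<dots> = (\<Sum>j\<le>n. t j)"
    by (rule sum.cong) (auto simp: coface_def)
  finally show ?thesis
    using t by (auto simp: std_simplex_def coface_def)
qed

lemma topspace_quot_topology: "topspace (quot_topology X q) = q ` topspace X"
proof
  show "topspace (quot_topology X q) \<subseteq> q ` topspace X"
    using openin_quot_topology[of X q "topspace (quot_topology X q)"] by simp
  have "{x \<in> topspace X. q x \<in> q ` topspace X} = topspace X"
    by blast
  then have "openin (quot_topology X q) (q ` topspace X)"
    by (simp add: openin_quot_topology)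
  then show "q ` topspace X \<subseteq> topspace (quot_topology X q)"
    by (rule openin_subset)
qed

lemma quotient_map_quot_topology: "quotient_map X (quot_topology X q) q"
  unfolding quotient_map_def topspace_quot_topology by (auto simp: openin_quot_topology)

lemma quotient_map_target_unique:
  assumes "quotient_map X Y f" and "quotient_map X Y' f"
  shows "Y = Y'"
  using assms unfolding topology_eq quotient_map_def by (metis openin_subset)

lemma embedding_map_subtopology_identity:
  assumes "\<And>x. x \<in> topspace (subtopology Y T) \<Longrightarrow> f x = x"
  shows "embedding_map (subtopology Y T) Y f"
proof (rule embedding_map_eq)
  show "embedding_map (subtopology Y T) Y id"
    by (simp add: embedding_map_def subtopology_restrict)
qed (use assms in simp)

definition face_step ::
  "(nat \<Rightarrow> 'a topology) \<Rightarrow> (nat \<Rightarrow> nat \<Rightarrow> 'a \<Rightarrow> 'a) \<Rightarrow>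
   ((nat \<times> (nat \<Rightarrow> real) \<times> 'a) \<times> (nat \<times> (nat \<Rightarrow> real) \<times> 'a)) set" where
  "face_step Z d = face_rel Z d \<union> (face_rel Z d)\<inverse>"

lemma real_class_eq_face_steps:
  "real_class Z d p =
     (if p \<in> topspace (total_space Z) then (face_step Z d)\<^sup>* `` {p} else {})"
  by (auto simp: real_class_def real_rel_def face_step_def)

lemma induced_real_map_real_class:
  "induced_real_map Z d (real_class Z d p) = real_class Z d p"
proof
  show "induced_real_map Z d (real_class Z d p) \<subseteq> real_class Z d p"
    by (auto simp: induced_real_map_def real_class_def real_rel_def intro: rtrancl_trans)
  have "q \<in> real_class Z d p \<Longrightarrow> p \<in> real_class Z d p" for q
    by (simp add: real_class_def real_rel_def)
  then show "real_class Z d p \<subseteq> induced_real_map Z d (real_class Z d p)"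
    unfolding induced_real_map_def real_class_def by blast
qed

lemma mem_topspace_total_space [simp]:
  "(n, t, z) \<in> topspace (total_space Z) \<longleftrightarrow> t \<in> std_simplex n \<and> z \<in> topspace (Z n)"
  by (simp add: total_space_def)

lemma total_space_sub_ss:
  "total_space (sub_ss Z S) =
     subtopology (total_space Z) (SIGMA n:UNIV. std_simplex n \<times> S n)"
  by (simp add: total_space_def sub_ss_def subtopology_sum_topology prod_topology_subtopology)

lemma topspace_sub_ss [simp]: "topspace (sub_ss Z S n) = topspace (Z n) \<inter> S n"
  by (simp add: sub_ss_def)

lemma rtrancl_face_step_sub_ss_subset:
  "(face_step (sub_ss Z S) d)\<^sup>* \<subseteq> (face_step Z d)\<^sup>*"
proof (rule rtrancl_mono)
  have "face_rel (sub_ss Z S) d \<subseteq> face_rel Z d"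
    unfolding face_rel_def topspace_sub_ss by blast
  then show "face_step (sub_ss Z S) d \<subseteq> face_step Z d"
    unfolding face_step_def by blast
qed

lemma real_rel_sub_ss_subset: "real_rel (sub_ss Z S) d \<subseteq> real_rel Z d"
proof -
  have "topspace (total_space (sub_ss Z S)) \<subseteq> topspace (total_space Z)"
    by (simp add: total_space_sub_ss)
  with rtrancl_face_step_sub_ss_subset show ?thesis
    unfolding real_rel_def face_step_def[symmetric] by blast
qed

lemma induced_real_map_sub_ss_class:
  assumes "p \<in> topspace (total_space (sub_ss Z S))"
  shows "induced_real_map Z d (real_class (sub_ss Z S) d p) = real_class Z d p"
proof
  have "real_class (sub_ss Z S) d p \<subseteq> real_class Z d p"
    using real_rel_sub_ss_subset unfolding real_class_def by blast
  then show "induced_real_map Z d (real_class (sub_ss Z S) d p) \<subseteq> real_class Z d p"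
    using induced_real_map_real_class[of Z d p] unfolding induced_real_map_def by blast
  have "p \<in> real_class (sub_ss Z S) d p"
    using assms by (simp add: real_class_def real_rel_def)
  then show "real_class Z d p \<subseteq> induced_real_map Z d (real_class (sub_ss Z S) d p)"
    unfolding induced_real_map_def real_class_def by blast
qed

lemma real_class_face_rel:
  assumes face: "(p, q) \<in> face_rel Z d" and q: "q \<in> topspace (total_space Z)"
  shows "real_class Z d p = real_class Z d q"
proof -
  have "p \<in> topspace (total_space Z)"
    using face coface_in_std_simplex unfolding face_rel_def by auto
  moreover have "(p, q) \<in> (face_step Z d)\<^sup>*" and "(q, p) \<in> (face_step Z d)\<^sup>*"
    using face by (auto simp: face_step_def)
  ultimately show ?thesis
    using q unfolding real_class_eq_face_steps by (auto intro: rtrancl_trans)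
qed

lemma full_rel_lift_along_coface:
  assumes full: "full_rel Z d S"
    and i: "i \<le> Suc n" and t: "t \<in> std_simplex n" and z: "z \<in> topspace (Z (Suc n))"
    and face_in_S: "(n, t, d n i z) \<in> topspace (total_space (sub_ss Z S))"
  shows "z \<in> S (Suc n)"
proof -
  define c where "c = real_class (sub_ss Z S) d (n, t, d n i z)"
  have "((Suc n, coface i t, z), (n, t, d n i z)) \<in> face_rel Z d"
    unfolding face_rel_def using i t z by blast
  moreover have "(n, t, d n i z) \<in> topspace (total_space Z)"
    using face_in_S by simp
  ultimately have "real_class Z d (Suc n, coface i t, z) = real_class Z d (n, t, d n i z)"
    by (rule real_class_face_rel)
  also have "\<dots> = induced_real_map Z d c"
    unfolding c_def using face_in_S by (rule induced_real_map_sub_ss_class[symmetric])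
  finally have same_class: "real_class Z d (Suc n, coface i t, z) = induced_real_map Z d c" .
  have "c \<in> skeleton (sub_ss Z S) d (Suc n)"
    unfolding skeleton_def c_def using face_in_S by (intro imageI) simp
  then have "((coface i t, z), c) \<in>
      {((t, z), c). (t, z) \<in> std_simplex (Suc n) \<times> topspace (Z (Suc n)) \<and>
                    c \<in> skeleton (sub_ss Z S) d (Suc n) \<and>
                    real_class Z d (Suc n, (t, z)) = induced_real_map Z d c}"
    using coface_in_std_simplex[OF t i] z same_class by simp
  then have "((coface i t, z), c) \<in>
      (\<lambda>(t, y). ((t, y), real_class (sub_ss Z S) d (Suc n, (t, y)))) `
        (std_simplex (Suc n) \<times> topspace (sub_ss Z S (Suc n)))"
    using bij_betw_imp_surj_on[OF full[unfolded full_rel_def, THEN spec, of "Suc n"]] by simp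
  then show ?thesis
    by auto
qed

lemma face_step_stays_in_sub_ss:
  assumes sub: "semi_simplicial_subspace Z d S" and full: "full_rel Z d S"
    and step: "(p, q) \<in> face_step Z d" and p: "p \<in> topspace (total_space (sub_ss Z S))"
  shows "q \<in> topspace (total_space (sub_ss Z S)) \<and> (p, q) \<in> face_step (sub_ss Z S) d"
proof -
  have face_rel_sub_ss:
    "((Suc n, coface i t, z), (n, t, d n i z)) \<in> face_rel (sub_ss Z S) d"
    if "i \<le> Suc n" "t \<in> std_simplex n" "z \<in> topspace (Z (Suc n))" "z \<in> S (Suc n)"
    for n i t z
  proof -
    have "z \<in> topspace (sub_ss Z S (Suc n))"
      using that by simp
    then show ?thesis
      unfolding face_rel_def using that by blast
  qed
  consider "(p, q) \<in> face_rel Z d" | "(q, p) \<in> face_rel Z d"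
    using step unfolding face_step_def by blast
  then show ?thesis
  proof cases
    case 1
    then obtain n i t z where pq: "p = (Suc n, coface i t, z)" "q = (n, t, d n i z)"
      and i: "i \<le> Suc n" and t: "t \<in> std_simplex n" and z: "z \<in> topspace (Z (Suc n))"
      unfolding face_rel_def by blast
    have "z \<in> S (Suc n)"
      using p pq by simp
    moreover from this have "d n i z \<in> S n" and "d n i z \<in> topspace (Z n)"
      using sub i by (auto simp: semi_simplicial_subspace_def subset_iff)
    ultimately show ?thesis
      using face_rel_sub_ss[OF i t z] pq t unfolding face_step_def by simp
  next
    case 2
    then obtain n i t z where pq: "q = (Suc n, coface i t, z)" "p = (n, t, d n i z)"
      and i: "i \<le> Suc n" and t: "t \<in> std_simplex n" and z: "z \<in> topspace (Z (Suc n))"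
      unfolding face_rel_def by blast
    have "z \<in> S (Suc n)"
      using full_rel_lift_along_coface[OF full i t z] p pq by simp
    then show ?thesis
      using face_rel_sub_ss[OF i t z] pq z coface_in_std_simplex[OF t i]
      unfolding face_step_def by simp
  qed
qed

lemma face_steps_stay_in_sub_ss:
  assumes sub: "semi_simplicial_subspace Z d S" and full: "full_rel Z d S"
    and steps: "(p, q) \<in> (face_step Z d)\<^sup>*" and p: "p \<in> topspace (total_space (sub_ss Z S))"
  shows "q \<in> topspace (total_space (sub_ss Z S)) \<and> (p, q) \<in> (face_step (sub_ss Z S) d)\<^sup>*"
  using steps
proof (induction rule: rtrancl_induct)
  case base
  show ?case using p by simp
next
  case (step q r)
  then have "r \<in> topspace (total_space (sub_ss Z S)) \<and> (q, r) \<in> face_step (sub_ss Z S) d"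
    using face_step_stays_in_sub_ss[OF sub full] by blast
  with step.IH show ?case
    by (blast intro: rtrancl_into_rtrancl)
qed

lemma real_class_sub_ss:
  assumes sub: "semi_simplicial_subspace Z d S" and full: "full_rel Z d S"
    and p: "p \<in> topspace (total_space (sub_ss Z S))"
  shows "real_class (sub_ss Z S) d p = real_class Z d p"
proof -
  have "p \<in> topspace (total_space Z)"
    using p by (auto simp: total_space_sub_ss)
  moreover have "(face_step (sub_ss Z S) d)\<^sup>* `` {p} = (face_step Z d)\<^sup>* `` {p}"
    using face_steps_stay_in_sub_ss[OF sub full _ p] rtrancl_face_step_sub_ss_subset by blast
  ultimately show ?thesis
    using p by (simp add: real_class_eq_face_steps)
qed

lemma real_class_sub_ss_saturated:
  assumes sub: "semi_simplicial_subspace Z d S" and full: "full_rel Z d S"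
  defines "A \<equiv> topspace (total_space (sub_ss Z S))"
  shows "{x \<in> topspace (total_space Z). real_class Z d x \<in> real_class Z d ` A} = A"
proof
  show "{x \<in> topspace (total_space Z). real_class Z d x \<in> real_class Z d ` A} \<subseteq> A"
  proof clarify
    fix x p assume x: "x \<in> topspace (total_space Z)" and p: "p \<in> A"
      and same_class: "real_class Z d x = real_class Z d p"
    have "x \<in> real_class Z d x"
      using x by (simp add: real_class_def real_rel_def)
    then have "x \<in> real_class Z d p"
      unfolding same_class .
    then have "(p, x) \<in> (face_step Z d)\<^sup>*"
      by (simp add: real_class_eq_face_steps split: if_splits)
    then show "x \<in> A"
      using face_steps_stay_in_sub_ss[OF sub full] p unfolding A_def by blast
  qed
  show "A \<subseteq> {x \<in> topspace (total_space Z). real_class Z d x \<in> real_class Z d ` A}"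
    unfolding A_def by (auto simp: total_space_sub_ss)
qed

lemma closedin_total_space_sub_ss:
  assumes "\<And>n. closedin (Z n) (S n)"
  shows "closedin (total_space Z) (topspace (total_space (sub_ss Z S)))"
proof -
  have "closedin (total_space Z) (SIGMA n:UNIV. std_simplex n \<times> S n)"
    unfolding total_space_def closedin_disjoint_union
    using assms closedin_topspace[of "top_of_set (std_simplex _)"]
    by (simp add: closedin_prod_Times_iff)
  then show ?thesis
    by (simp add: total_space_sub_ss closedin_Int)
qed

lemma openin_total_space_sub_ss:
  assumes "\<And>n. openin (Z n) (S n)"
  shows "openin (total_space Z) (topspace (total_space (sub_ss Z S)))"
proof -
  have "openin (total_space Z) (SIGMA n:UNIV. std_simplex n \<times> S n)"
    unfolding total_space_def openin_disjoint_union
    using assms openin_topspace[of "top_of_set (std_simplex _)"]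
    by (simp add: openin_prod_Times_iff)
  then show ?thesis
    by (simp add: total_space_sub_ss openin_Int)
qed

lemma quotient_map_real_class: "quotient_map (total_space Z) (geom_real Z d) (real_class Z d)"
  unfolding geom_real_def by (rule quotient_map_quot_topology)

lemma closedin_geom_real_sub_ss_image:
  assumes sub: "semi_simplicial_subspace Z d S" and full: "full_rel Z d S"
    and "closedin (total_space Z) (topspace (total_space (sub_ss Z S)))"
  shows "closedin (geom_real Z d) (real_class Z d ` topspace (total_space (sub_ss Z S)))"
  using quotient_map_real_class[unfolded quotient_map_saturated_closed] assms(3)
    real_class_sub_ss_saturated[OF sub full] by blast

lemma openin_geom_real_sub_ss_image:
  assumes sub: "semi_simplicial_subspace Z d S" and full: "full_rel Z d S"
    and "openin (total_space Z) (topspace (total_space (sub_ss Z S)))"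
  shows "openin (geom_real Z d) (real_class Z d ` topspace (total_space (sub_ss Z S)))"
  using quotient_map_real_class[unfolded quotient_map_saturated_open] assms(3)
    real_class_sub_ss_saturated[OF sub full] by blast

lemma topspace_geom_real_sub_ss:
  assumes sub: "semi_simplicial_subspace Z d S" and full: "full_rel Z d S"
  shows "topspace (geom_real (sub_ss Z S) d) =
           real_class Z d ` topspace (total_space (sub_ss Z S))"
  unfolding geom_real_def topspace_quot_topology using real_class_sub_ss[OF sub full] by simp

lemma induced_real_map_sub_ss_ident:
  assumes sub: "semi_simplicial_subspace Z d S" and full: "full_rel Z d S"
    and c: "c \<in> topspace (geom_real (sub_ss Z S) d)"
  shows "induced_real_map Z d c = c"
  using c by (auto simp: topspace_geom_real_sub_ss[OF sub full] induced_real_map_real_class)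

lemma induced_real_map_sub_ss_image:
  assumes sub: "semi_simplicial_subspace Z d S" and full: "full_rel Z d S"
  shows "induced_real_map Z d ` topspace (geom_real (sub_ss Z S) d) =
           real_class Z d ` topspace (total_space (sub_ss Z S))"
  using induced_real_map_sub_ss_ident[OF sub full] topspace_geom_real_sub_ss[OF sub full]
  by simp

lemma geom_real_sub_ss_subtopology:
  assumes sub: "semi_simplicial_subspace Z d S" and full: "full_rel Z d S"
  defines "A \<equiv> topspace (total_space (sub_ss Z S))"
  assumes image: "openin (geom_real Z d) (real_class Z d ` A) \<or>
                  closedin (geom_real Z d) (real_class Z d ` A)"
  shows "geom_real (sub_ss Z S) d = subtopology (geom_real Z d) (real_class Z d ` A)"
proof -
  have "quotient_map (subtopology (total_space Z) A)
          (subtopology (geom_real Z d) (real_class Z d ` A)) (real_class Z d)"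
    using quotient_map_real_class real_class_sub_ss_saturated[OF sub full] image
    unfolding A_def by (rule quotient_map_restriction)
  moreover have "subtopology (total_space Z) A = total_space (sub_ss Z S)"
    by (simp add: A_def total_space_sub_ss subtopology_restrict)
  ultimately have "quotient_map (total_space (sub_ss Z S))
      (subtopology (geom_real Z d) (real_class Z d ` A)) (real_class (sub_ss Z S) d)"
    using real_class_sub_ss[OF sub full] unfolding A_def by (auto elim!: quotient_map_eq)
  then show ?thesis
    unfolding geom_real_def using quotient_map_quot_topology quotient_map_target_unique by blast
qed

lemma embedding_map_induced_real_map:
  assumes sub: "semi_simplicial_subspace Z d S" and full: "full_rel Z d S"
  defines "A \<equiv> topspace (total_space (sub_ss Z S))"
  assumes image: "openin (geom_real Z d) (real_class Z d ` A) \<or>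
                  closedin (geom_real Z d) (real_class Z d ` A)"
  shows "embedding_map (geom_real (sub_ss Z S) d) (geom_real Z d) (induced_real_map Z d)"
  using induced_real_map_sub_ss_ident[OF sub full]
  unfolding geom_real_sub_ss_subtopology[OF sub full image[unfolded A_def]]
  by (rule embedding_map_subtopology_identity)

theorem lemma6p5:
  fixes Z :: "nat \<Rightarrow> 'a topology" and d :: "nat \<Rightarrow> nat \<Rightarrow> 'a \<Rightarrow> 'a"
    and S :: "nat \<Rightarrow> 'a set"
  assumes "semi_simplicial_space Z d"
    and "semi_simplicial_subspace Z d S"
    and "full_rel Z d S"
  shows "((\<forall>n. closedin (Z n) (S n)) \<longrightarrow>
           closed_inclusion (geom_real (sub_ss Z S) d) (geom_real Z d) (induced_real_map Z d))
       \<and> ((\<forall>n. openin (Z n) (S n)) \<longrightarrow>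
           open_inclusion (geom_real (sub_ss Z S) d) (geom_real Z d) (induced_real_map Z d))"
proof -
  note sub = assms(2) and full = assms(3)
  show ?thesis
  proof (intro conjI impI)
    assume "\<forall>n. closedin (Z n) (S n)"
    then have "closedin (geom_real Z d) (real_class Z d ` topspace (total_space (sub_ss Z S)))"
      by (intro closedin_geom_real_sub_ss_image[OF sub full] closedin_total_space_sub_ss) simp
    then show "closed_inclusion (geom_real (sub_ss Z S) d) (geom_real Z d) (induced_real_map Z d)"
      unfolding closed_inclusion_def induced_real_map_sub_ss_image[OF sub full]
      using embedding_map_induced_real_map[OF sub full] by blast
  next
    assume "\<forall>n. openin (Z n) (S n)"
    then have "openin (geom_real Z d) (real_class Z d ` topspace (total_space (sub_ss Z S)))"
      by (intro openin_geom_real_sub_ss_image[OF sub full] openin_total_space_sub_ss) simp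
    then show "open_inclusion (geom_real (sub_ss Z S) d) (geom_real Z d) (induced_real_map Z d)"
      unfolding open_inclusion_def induced_real_map_sub_ss_image[OF sub full]
      using embedding_map_induced_real_map[OF sub full] by blast
  qed
qed

end
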